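(* For every integer $n$, \[ 25\sum_{k=1}^n F_k^{\,4}=F_{2n+1}L_{n-1}L_{n+2}+6n+3\,. \]
   Context: $F_i$ and $L_i$ denote the Fibonacci and Lucas numbers, defined for all $i\in\mathbb{Z}$ by $F_i=F_{i-1}+F_{i-2}$, $F_0=0$, $F_1=1$, and $L_i=L_{i-1}+L_{i-2}$, $L_0=2$, $L_1=1$; equivalently $F_{-i}=(-1)^{i-1}F_i$ and $L_{-i}=(-1)^iL_i$. Summation convention for an arbitrary integer upper limit: $\sum_{k=a}^{a-1} f(k)=0$, and for $n<a-1$, $\sum_{k=a}^{n} f(k) = -\sum_{k=n+1}^{a-1} f(k)$. *)

theory Defs
  imports Main
begin

fun fibn :: "nat \<Rightarrow> int" where
  "fibn 0 = 0" | "fibn (Suc 0) = 1" | "fibn (Suc (Suc n)) = fibn (Suc n) + fibn n"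

fun lucn :: "nat \<Rightarrow> int" where
  "lucn 0 = 2" | "lucn (Suc 0) = 1" | "lucn (Suc (Suc n)) = lucn (Suc n) + lucn n"

definition F :: "int \<Rightarrow> int" where
  "F i = (if i \<ge> 0 then fibn (nat i) else (-1) ^ (nat (-i) + 1) * fibn (nat (-i)))"

definition L :: "int \<Rightarrow> int" where
  "L i = (if i \<ge> 0 then lucn (nat i) else (-1) ^ nat (-i) * lucn (nat (-i)))"

text \<open>Sum with arbitrary integer upper limit: sum_{k=a}^{n} f k, with the
  convention sum_{k=a}^{a-1} = 0 and, for n < a-1,
  sum_{k=a}^{n} f k = - sum_{k=n+1}^{a-1} f k.\<close>
definition isum :: "int \<Rightarrow> int \<Rightarrow> (int \<Rightarrow> 'b::ab_group_add) \<Rightarrow> 'b" where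
  "isum a n f = (if n \<ge> a - 1 then sum f {a..n} else - sum f {n+1..a-1})"

end

theory Submission
  imports Defs
begin

text \<open>Both sides have the same backward difference in \<open>n\<close> and vanish at \<open>n = 0\<close>.
  With \<open>a = F n\<close> and \<open>b = F (n+1)\<close> every Fibonacci and Lucas number in the
  difference of the right-hand side is a linear form in \<open>a, b\<close>, and the difference
  becomes \<open>25 a\<^sup>4 + 6 - 6 (b\<^sup>2 - a b - a\<^sup>2)\<^sup>2\<close>; Cassini's identity
  \<open>(b\<^sup>2 - a b - a\<^sup>2)\<^sup>2 = 1\<close> removes the last two terms.\<close>

lemma int_shift_invariant_const:
  fixes h :: "int \<Rightarrow> 'a"
  assumes "\<And>i. h (i + 1) = h i"
  shows "h i = h 0"
proof (induct i rule: int_induct[where k = 0])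
  case (step2 i)
  then show ?case using assms[of "i - 1"] by simp
qed (use assms in auto)

lemma int_backward_difference_eqI:
  fixes f g :: "int \<Rightarrow> 'a::ab_group_add"
  assumes "\<And>n. f n - f (n - 1) = g n - g (n - 1)" and "f 0 = g 0"
  shows "f n = g n"
proof -
  have "f n - g n = f 0 - g 0"
  proof (rule int_shift_invariant_const[where h = "\<lambda>n. f n - g n"])
    fix i
    show "f (i + 1) - g (i + 1) = f i - g i"
      using assms(1)[of "i + 1"] by (simp add: algebra_simps)
  qed
  then show ?thesis using assms(2) by simp
qed

lemma fibonacci_recurrence_eqI:
  fixes f g :: "int \<Rightarrow> 'a::ab_group_add"
  assumes "\<And>i. f (i + 2) = f (i + 1) + f i" and "\<And>i. g (i + 2) = g (i + 1) + g i"
    and "f 0 = g 0" and "f 1 = g 1"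
  shows "f i = g i"
proof -
  have "f i = g i \<and> f (i + 1) = g (i + 1)"
  proof (induct i rule: int_induct[where k = 0])
    case base
    then show ?case using assms(3,4) by simp
  next
    case (step1 i)
    then show ?case using assms(1,2)[of i] by (simp add: add.assoc)
  next
    case (step2 i)
    then show ?case using assms(1,2)[of "i - 1"] by (simp add: algebra_simps)
  qed
  then show ?thesis by simp
qed

lemma isum_diff_last:
  "isum a n f - isum a (n - 1) f = f n"
proof -
  consider "n \<ge> a" | "n = a - 1" | "n < a - 1" by linarith
  then show ?thesis
  proof cases
    case 1
    then have "{a..n} = insert n {a..n - 1}" by auto
    then show ?thesis using 1 by (simp add: isum_def)
  next
    case 2
    then show ?thesis by (simp add: isum_def)
  next
    case 3
    then have "{n..a - 1} = insert n {n + 1..a - 1}" by auto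
    then show ?thesis using 3 by (simp add: isum_def)
  qed
qed

lemma F_0 [simp]: "F 0 = 0" and F_1 [simp]: "F 1 = 1"
  and L_0 [simp]: "L 0 = 2" and L_1 [simp]: "L 1 = 1"
  by (simp_all add: F_def L_def)

lemma F_add_two: "F (i + 2) = F (i + 1) + F i"
proof -
  consider "i \<ge> 0" | "i = -1" | "i = -2" | "i \<le> -3" by linarith
  then show ?thesis
  proof cases
    case 1
    then obtain m where m: "i = int m" by (metis nonneg_eq_int)
    have "nat (int m + 2) = Suc (Suc m)" "nat (int m + 1) = Suc m" by auto
    then show ?thesis using m by (simp add: F_def)
  next
    case 2
    then show ?thesis by (simp add: F_def)
  next
    case 3
    then show ?thesis by (simp add: F_def numeral_eq_Suc)
  next
    case 4
    then have "nat (-(i + 2)) = Suc (nat (-i - 3))" "nat (-(i + 1)) = Suc (Suc (nat (-i - 3)))"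
      "nat (-i) = Suc (Suc (Suc (nat (-i - 3))))" by auto
    then show ?thesis using 4 by (simp add: F_def algebra_simps)
  qed
qed

lemma L_add_two: "L (i + 2) = L (i + 1) + L i"
proof -
  consider "i \<ge> 0" | "i = -1" | "i = -2" | "i \<le> -3" by linarith
  then show ?thesis
  proof cases
    case 1
    then obtain m where m: "i = int m" by (metis nonneg_eq_int)
    have "nat (int m + 2) = Suc (Suc m)" "nat (int m + 1) = Suc m" by auto
    then show ?thesis using m by (simp add: L_def)
  next
    case 2
    then show ?thesis by (simp add: L_def)
  next
    case 3
    then show ?thesis by (simp add: L_def numeral_eq_Suc)
  next
    case 4
    then have "nat (-(i + 2)) = Suc (nat (-i - 3))" "nat (-(i + 1)) = Suc (Suc (nat (-i - 3)))"
      "nat (-i) = Suc (Suc (Suc (nat (-i - 3))))" by auto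
    then show ?thesis using 4 by (simp add: L_def algebra_simps)
  qed
qed

lemma F_diff_one: "F (i - 1) = F (i + 1) - F i"
  using F_add_two[of "i - 1"] by (simp add: algebra_simps)

lemma L_eq_F: "L i = F (i - 1) + F (i + 1)"
proof (rule fibonacci_recurrence_eqI[where f = L and g = "\<lambda>i. F (i - 1) + F (i + 1)"])
  fix i
  show "F (i + 2 - 1) + F (i + 2 + 1) = F (i + 1 - 1) + F (i + 1 + 1) + (F (i - 1) + F (i + 1))"
    using F_add_two[of "i - 1"] F_add_two[of "i + 1"] by (simp add: algebra_simps)
qed (auto simp: L_add_two F_def numeral_2_eq_2)

lemma F_add: "F (m + k) = F m * F (k + 1) + F (m - 1) * F k"
proof (rule fibonacci_recurrence_eqI[where f = "\<lambda>k. F (m + k)"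
      and g = "\<lambda>k. F m * F (k + 1) + F (m - 1) * F k"])
  fix i
  show "F (m + (i + 2)) = F (m + (i + 1)) + F (m + i)"
    using F_add_two[of "m + i"] by (simp add: algebra_simps)
next
  fix i
  show "F m * F (i + 2 + 1) + F (m - 1) * F (i + 2) =
      F m * F (i + 1 + 1) + F (m - 1) * F (i + 1) + (F m * F (i + 1) + F (m - 1) * F i)"
    using F_add_two[of "i + 1"] F_add_two[of i] by (simp add: algebra_simps)
next
  show "F (m + 1) = F m * F (1 + 1) + F (m - 1) * F 1"
    using F_add_two[of "m - 1"] F_add_two[of 0] by (simp add: algebra_simps)
qed simp

lemma F_double_plus_one: "F (2 * n + 1) = F n ^ 2 + F (n + 1) ^ 2"
  using F_add[of "n + 1" n] by (simp add: power2_eq_square algebra_simps)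

lemma F_cassini_squared: "(F (i + 1) ^ 2 - F (i + 1) * F i - F i ^ 2) ^ 2 = 1"
proof -
  let ?c = "\<lambda>i. F (i + 1) ^ 2 - F (i + 1) * F i - F i ^ 2"
  have alternates: "?c (i + 1) = - ?c i" for i
    using F_add_two[of i] by (simp add: power2_eq_square algebra_simps)
  have "?c i ^ 2 = ?c 0 ^ 2"
    by (intro int_shift_invariant_const[where h = "\<lambda>i. ?c i ^ 2"])
      (simp only: alternates power2_minus)
  also have "\<dots> = 1"
    using F_add_two[of 0] by simp
  finally show ?thesis .
qed

lemma F_L_product_backward_difference:
  "F (2 * n + 1) * L (n - 1) * L (n + 2) - F (2 * n - 1) * L (n - 2) * L (n + 1) + 6
    = 25 * F n ^ 4"
proof -
  define a b where "a = F n" and "b = F (n + 1)"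
  have F_n_minus_1: "F (n - 1) = b - a"
    using F_diff_one[of n] by (simp add: a_def b_def)
  have F_n_minus_2: "F (n - 2) = 2 * a - b"
    using F_diff_one[of "n - 1"] F_n_minus_1 by (simp add: a_def)
  have F_n_minus_3: "F (n - 3) = 2 * b - 3 * a"
    using F_diff_one[of "n - 2"] F_n_minus_1 F_n_minus_2 by simp
  have F_n_plus_2: "F (n + 2) = a + b"
    using F_add_two[of n] by (simp add: a_def b_def)
  have F_n_plus_3: "F (n + 3) = a + 2 * b"
    using F_add_two[of "n + 1"] F_n_plus_2 by (simp add: b_def add.assoc)
  have "L (n - 1) = 3 * a - b"
    using L_eq_F[of "n - 1"] F_n_minus_2 by (simp add: a_def)
  moreover have "L (n + 2) = a + 3 * b"
    using L_eq_F[of "n + 2"] F_n_plus_3 by (simp add: b_def algebra_simps)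
  moreover have "L (n - 2) = 3 * b - 4 * a"
    using L_eq_F[of "n - 2"] F_n_minus_3 F_n_minus_1 by simp
  moreover have "L (n + 1) = 2 * a + b"
    using L_eq_F[of "n + 1"] F_n_plus_2 by (simp add: a_def algebra_simps)
  moreover have "F (2 * n + 1) = a ^ 2 + b ^ 2"
    using F_double_plus_one[of n] by (simp add: a_def b_def)
  moreover have "F (2 * n - 1) = (b - a) ^ 2 + a ^ 2"
    using F_double_plus_one[of "n - 1"] F_n_minus_1 by (simp add: a_def algebra_simps)
  moreover have "(a ^ 2 + b ^ 2) * (3 * a - b) * (a + 3 * b)
      - ((b - a) ^ 2 + a ^ 2) * (3 * b - 4 * a) * (2 * a + b) + 6
      = 25 * a ^ 4 + 6 - 6 * (b ^ 2 - b * a - a ^ 2) ^ 2"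
    by (simp add: power2_eq_square power4_eq_xxxx algebra_simps)
  moreover have "(b ^ 2 - b * a - a ^ 2) ^ 2 = 1"
    using F_cassini_squared[of n] by (simp add: a_def b_def)
  ultimately show ?thesis by (simp add: a_def)
qed

theorem corollary1:
  fixes n :: int
  shows "25 * isum 1 n (\<lambda>k. F k ^ 4) = F (2*n+1) * L (n-1) * L (n+2) + 6*n + 3"
proof (rule int_backward_difference_eqI[where f = "\<lambda>n. 25 * isum 1 n (\<lambda>k. F k ^ 4)"
      and g = "\<lambda>n. F (2 * n + 1) * L (n - 1) * L (n + 2) + 6 * n + 3"])
  fix n :: int
  have "2 * (n - 1) + 1 = 2 * n - 1" "n - 1 - 1 = n - 2" "n - 1 + 2 = n + 1" by simp_all
  then show "25 * isum 1 n (\<lambda>k. F k ^ 4) - 25 * isum 1 (n - 1) (\<lambda>k. F k ^ 4)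
      = F (2 * n + 1) * L (n - 1) * L (n + 2) + 6 * n + 3
        - (F (2 * (n - 1) + 1) * L (n - 1 - 1) * L (n - 1 + 2) + 6 * (n - 1) + 3)"
    using isum_diff_last[of 1 n "\<lambda>k. F k ^ 4"] F_L_product_backward_difference[of n]
    by (simp add: algebra_simps)
next
  show "25 * isum 1 0 (\<lambda>k. F k ^ 4) = F (2 * 0 + 1) * L (0 - 1) * L (0 + 2) + 6 * 0 + 3"
    using L_eq_F[of "-1"] L_eq_F[of 2] F_add_two[of 0] F_add_two[of "-1"] F_add_two[of 1]
      F_add_two[of "-2"]
    by (simp add: isum_def)
qed

end
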